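(* Let $s\ge1$ and let $T\in\mathcal{T}(s)\setminus B(s\varpi_2)$ with $T$ not equal to the tableau all of whose $s$ columns are $\binom{1}{\bar1}$. Then there is a unique $a\in\{1,\dots,n,\bar n\}$ and a unique $m\in\mathbb{Z}_{>0}$ such that $T$ contains, as a sequence of consecutive columns, one of the following configurations (writing $\binom{a}{\bar a}^{m}$ for $m$ consecutive columns $\binom{a}{\bar a}$): (i) $\binom{a}{b_1}\binom{a}{\bar a}^{m}\binom{c_1}{d_1}$, where $b_1\ne\bar a$, and $c_1\neq a$ or $d_1\ne\bar a$; (ii) $\binom{b_2}{c_2}\binom{a}{\bar a}^{m}\binom{d_2}{\bar a}$, where $d_2\ne a$, and $b_2\ne a$ or $c_2\neq\bar a$; (iii) $\binom{b_3}{c_3}\binom{a}{\bar a}^{m+1}\binom{d_3}{e_3}$, where $b_3\ne a$ and $e_3\ne\bar a$; where a bounding column $\binom{c_1}{d_1}$, $\binom{b_2}{c_2}$, $\binom{b_3}{c_3}$ or $\binom{d_3}{e_3}$ may be absent when the block of columns $\binom{a}{\bar a}$ reaches the corresponding end of $T$, in which case the condition on it is vacuous.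
   Context: Let $n\ge4$. Alphabet: $1<2<\dots<n-1<\{n,\bar n\}<\overline{n-1}<\dots<\bar2<\bar1$, a partial order in which $n$ and $\bar n$ are incomparable; we set $\bar{\bar i}=i$. A tableau of shape $(k,k)$ is a sequence of $k$ columns, column $j$ having top entry $a_j$ and bottom entry $b_j$ from this alphabet; we write it $\binom{a_1}{b_1}\cdots\binom{a_k}{b_k}$ (here $\binom{x}{y}$ denotes a column with top $x$ and bottom $y$, not a binomial coefficient). Conditions: (C1) $a_j\le a_{j+1}$ and $b_j\le b_{j+1}$ for all $j$; (C2) $b_j\not\le a_j$ for all $j$; (C3) there is no $j$ and letter $x$ with $a_j=a_{j+1}=x$, $b_{j+1}=\bar x$, and no $j$ and $x$ with $a_j=x$, $b_j=b_{j+1}=\bar x$; (C4) there are no $j<j'$ with $\binom{a_j}{b_j}=\binom{n-1}{n}$ and $\binom{a_{j'}}{b_{j'}}=\binom{n}{\overline{n-1}}$, and no $j<j'$ with $\binom{a_j}{b_j}=\binom{n-1}{\bar n}$ and $\binom{a_{j'}}{b_{j'}}=\binom{\bar n}{\overline{n-1}}$; (C5) no column equals $\binom{1}{\bar1}$. $B(k\varpi_2)$ denotes the set of tableaux of shape $(k,k)$ satisfying (C1)--(C5) (the Kashiwara--Nakashima tableaux of type $D_n$ of shape $(k,k)$), and $\mathcal{T}(s)$ the set of tableaux of shape $(s,s)$ satisfying (C1), (C2) and (C4). *)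

theory Defs
  imports Main
begin

text \<open>Letters of the type D_n alphabet: Unb i stands for i, Bar i for bar i (1 <= i <= n).\<close>
datatype letter = Unb nat | Bar nat

fun valid_letter :: "nat \<Rightarrow> letter \<Rightarrow> bool" where
  "valid_letter n (Unb i) = (1 \<le> i \<and> i \<le> n)"
| "valid_letter n (Bar i) = (1 \<le> i \<and> i \<le> n)"

fun bar :: "letter \<Rightarrow> letter" where
  "bar (Unb i) = Bar i"
| "bar (Bar i) = Unb i"

text \<open>Position in the chain 1 < ... < n-1 < {n, bar n} < bar(n-1) < ... < bar 1.\<close>
fun rank :: "nat \<Rightarrow> letter \<Rightarrow> nat" where
  "rank n (Unb i) = i"
| "rank n (Bar i) = 2 * n - i"

text \<open>The partial order: n and bar n are incomparable.\<close>
definition le_D :: "nat \<Rightarrow> letter \<Rightarrow> letter \<Rightarrow> bool" where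
  "le_D n x y \<longleftrightarrow> x = y \<or> rank n x < rank n y"

text \<open>A column is (top, bottom); a tableau of shape (k,k) is a list of k columns.\<close>
type_synonym column = "letter \<times> letter"

definition is_tableau :: "nat \<Rightarrow> nat \<Rightarrow> column list \<Rightarrow> bool" where
  "is_tableau n k T \<longleftrightarrow> length T = k \<and>
     (\<forall>c\<in>set T. valid_letter n (fst c) \<and> valid_letter n (snd c))"

definition C1 :: "nat \<Rightarrow> column list \<Rightarrow> bool" where
  "C1 n T \<longleftrightarrow> (\<forall>j. Suc j < length T \<longrightarrow>
     le_D n (fst (T!j)) (fst (T!Suc j)) \<and> le_D n (snd (T!j)) (snd (T!Suc j)))"

definition C2 :: "nat \<Rightarrow> column list \<Rightarrow> bool" where
  "C2 n T \<longleftrightarrow> (\<forall>j < length T. \<not> le_D n (snd (T!j)) (fst (T!j)))"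

definition C3 :: "column list \<Rightarrow> bool" where
  "C3 T \<longleftrightarrow> (\<forall>j x. Suc j < length T \<longrightarrow>
     \<not> (fst (T!j) = x \<and> fst (T!Suc j) = x \<and> snd (T!Suc j) = bar x) \<and>
     \<not> (fst (T!j) = x \<and> snd (T!j) = bar x \<and> snd (T!Suc j) = bar x))"

definition C4 :: "nat \<Rightarrow> column list \<Rightarrow> bool" where
  "C4 n T \<longleftrightarrow> (\<forall>j j'. j < j' \<and> j' < length T \<longrightarrow>
     \<not> (T!j = (Unb (n-1), Unb n) \<and> T!j' = (Unb n, Bar (n-1))) \<and>
     \<not> (T!j = (Unb (n-1), Bar n) \<and> T!j' = (Bar n, Bar (n-1))))"

definition C5 :: "column list \<Rightarrow> bool" where
  "C5 T \<longleftrightarrow> (\<forall>c\<in>set T. c \<noteq> (Unb 1, Bar 1))"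

definition B_KN :: "nat \<Rightarrow> nat \<Rightarrow> column list set" where
  "B_KN n k = {T. is_tableau n k T \<and> C1 n T \<and> C2 n T \<and> C3 T \<and> C4 n T \<and> C5 T}"

definition tabT :: "nat \<Rightarrow> nat \<Rightarrow> column list set" where
  "tabT n s = {T. is_tableau n s T \<and> C1 n T \<and> C2 n T \<and> C4 n T}"

definition A_letters :: "nat \<Rightarrow> letter set" where
  "A_letters n = {Unb i | i. 1 \<le> i \<and> i \<le> n} \<union> {Bar n}"

definition conf1 :: "column list \<Rightarrow> letter \<Rightarrow> nat \<Rightarrow> bool" where
  "conf1 T a m \<longleftrightarrow> (\<exists>L b1 R. T = L @ [(a, b1)] @ replicate m (a, bar a) @ R \<and>
     b1 \<noteq> bar a \<and> (R = [] \<or> hd R \<noteq> (a, bar a)))"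

definition conf2 :: "column list \<Rightarrow> letter \<Rightarrow> nat \<Rightarrow> bool" where
  "conf2 T a m \<longleftrightarrow> (\<exists>L d2 R. T = L @ replicate m (a, bar a) @ [(d2, bar a)] @ R \<and>
     d2 \<noteq> a \<and> (L = [] \<or> last L \<noteq> (a, bar a)))"

definition conf3 :: "column list \<Rightarrow> letter \<Rightarrow> nat \<Rightarrow> bool" where
  "conf3 T a m \<longleftrightarrow> (\<exists>L R. T = L @ replicate (m + 1) (a, bar a) @ R \<and>
     (L = [] \<or> fst (last L) \<noteq> a) \<and> (R = [] \<or> snd (hd R) \<noteq> bar a))"

end

theory Submission
  imports Defs
begin

text \<open>
  The columns (a, bar a) of a tableau in T(s) all carry the same letter a, which lies in
  {1, ..., n, bar n}: the rows weakly increase while bar reverses the order on these letters.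
  By antisymmetry these columns form a single run (a, bar a)^M, and every violation of C3 or C5
  involves such a column. Call the run attached if it is preceded by a column with top a or
  followed by a column with bottom bar a, i.e. if C3 fails at its boundary. Configurations (i)
  and (ii) say exactly that the run is attached and m = M, configuration (iii) that it is
  detached and m = M - 1; hence (a, m) is determined by T. For existence it remains to exclude
  a detached run of length one: then C3 holds, and C5 can only fail for a = 1, where the
  extremality of 1 and bar 1 forces T = (1, bar 1)^s.
\<close>

definition col_le :: "nat \<Rightarrow> column \<Rightarrow> column \<Rightarrow> bool" where
  "col_le n c d \<longleftrightarrow> le_D n (fst c) (fst d) \<and> le_D n (snd c) (snd d)"

lemma transp_col_le: "transp (col_le n)"
  by (auto simp: transp_def col_le_def le_D_def)

lemma col_le_refl: "col_le n c c"
  by (simp add: col_le_def le_D_def)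

lemma col_le_antisym: "col_le n c d \<Longrightarrow> col_le n d c \<Longrightarrow> c = d"
  by (auto simp: col_le_def le_D_def prod_eq_iff)

lemma C1_iff_sorted_wrt: "C1 n T \<longleftrightarrow> sorted_wrt (col_le n) T"
  by (simp add: C1_def sorted_wrt_iff_nth_Suc_transp[OF transp_col_le] col_le_def)

lemma sorted_wrt_total_on_set:
  assumes "sorted_wrt P xs" "\<And>x. P x x" "x \<in> set xs" "y \<in> set xs"
  shows "P x y \<or> P y x"
proof -
  obtain i j where "i < length xs" "j < length xs" "x = xs ! i" "y = xs ! j"
    using assms(3,4) by (auto simp: in_set_conv_nth)
  then show ?thesis
    using assms(1,2) sorted_wrt_nth_less by (metis linorder_neqE_nat)
qed

lemma A_letters_if_not_bar_le:
  "valid_letter n x \<Longrightarrow> \<not> le_D n (bar x) x \<Longrightarrow> x \<in> A_letters n"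
  by (cases x) (auto simp: le_D_def A_letters_def)

lemma A_letters_eq_if_le_D:
  assumes "x \<in> A_letters n" "y \<in> A_letters n" "le_D n x y" "le_D n (bar x) (bar y)"
  shows "x = y"
  using assms by (auto simp: A_letters_def le_D_def)

lemma le_D_Unb1_eq: "valid_letter n x \<Longrightarrow> le_D n x (Unb 1) \<Longrightarrow> x = Unb 1"
  by (cases x) (auto simp: le_D_def)

lemma Bar1_le_D_eq: "valid_letter n x \<Longrightarrow> le_D n (Bar 1) x \<Longrightarrow> x = Bar 1"
  by (cases x) (auto simp: le_D_def)

lemma tabT_column_valid:
  "T \<in> tabT n s \<Longrightarrow> c \<in> set T \<Longrightarrow> valid_letter n (fst c) \<and> valid_letter n (snd c)"
  by (simp add: tabT_def is_tableau_def)

lemma tabT_column_strict: "T \<in> tabT n s \<Longrightarrow> c \<in> set T \<Longrightarrow> \<not> le_D n (snd c) (fst c)"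
  by (auto simp: tabT_def C2_def in_set_conv_nth)

lemma pair_column_letter:
  "T \<in> tabT n s \<Longrightarrow> (x, bar x) \<in> set T \<Longrightarrow> x \<in> A_letters n"
  using A_letters_if_not_bar_le tabT_column_valid tabT_column_strict by fastforce

lemma pair_column_letter_unique:
  assumes "T \<in> tabT n s" "(x, bar x) \<in> set T" "(y, bar y) \<in> set T"
  shows "x = y"
proof -
  have "sorted_wrt (col_le n) T"
    using assms(1) by (simp add: tabT_def C1_iff_sorted_wrt)
  then have "col_le n (x, bar x) (y, bar y) \<or> col_le n (y, bar y) (x, bar x)"
    using sorted_wrt_total_on_set[of "col_le n" T "(x, bar x)" "(y, bar y)"] assms(2,3) col_le_refl
    by blast
  then show ?thesis
    using A_letters_eq_if_le_D pair_column_letter[OF assms(1)] assms(2,3)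
    by (metis col_le_def fst_conv snd_conv)
qed

definition maximal_run :: "column list \<Rightarrow> column \<Rightarrow> column list \<Rightarrow> nat \<Rightarrow> column list \<Rightarrow> bool" where
  "maximal_run T c L M R \<longleftrightarrow> T = L @ replicate M c @ R \<and> 0 < M \<and>
     (L = [] \<or> last L \<noteq> c) \<and> (R = [] \<or> hd R \<noteq> c)"

lemma maximal_run_pos: "maximal_run T c L M R \<Longrightarrow> 0 < M"
  by (simp add: maximal_run_def)

lemma maximal_run_mem: "maximal_run T c L M R \<Longrightarrow> c \<in> set T"
  by (simp add: maximal_run_def)

lemma maximal_run_exists:
  assumes "c \<in> set T"
  obtains L M R where "maximal_run T c L M R"
proof -
  obtain L R' where T: "T = L @ c # R'" and "c \<notin> set L"
    using split_list_first[OF assms] by blast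
  define R where "R = dropWhile (\<lambda>x. x = c) R'"
  define M where "M = Suc (length (takeWhile (\<lambda>x. x = c) R'))"
  have "replicate (length (takeWhile (\<lambda>x. x = c) R')) c = takeWhile (\<lambda>x. x = c) R'"
    by (rule replicate_length_same) (auto dest: set_takeWhileD)
  then have "replicate M c @ R = c # R'"
    unfolding M_def R_def by simp
  moreover have "R = [] \<or> hd R \<noteq> c"
    unfolding R_def using hd_dropWhile[of "\<lambda>x. x = c" R'] by blast
  moreover have "L = [] \<or> last L \<noteq> c"
    using \<open>c \<notin> set L\<close> last_in_set by metis
  ultimately have "maximal_run T c L M R"
    unfolding maximal_run_def M_def using T by simp
  then show thesis by (rule that)
qed

lemma maximal_run_outside:
  assumes "C1 n T" "maximal_run T c L M R"
  shows "c \<notin> set L" "c \<notin> set R"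
proof -
  have sorted: "sorted_wrt (col_le n) (L @ replicate M c @ R)" and "0 < M"
    and hL: "L = [] \<or> last L \<noteq> c" and hR: "R = [] \<or> hd R \<noteq> c"
    using assms by (auto simp: maximal_run_def C1_iff_sorted_wrt)
  show "c \<notin> set L"
  proof
    assume "c \<in> set L"
    then obtain L0 l where L: "L = L0 @ [l]" and "l \<noteq> c"
      using hL by (metis empty_iff empty_set rev_exhaust last_snoc)
    have "col_le n c l" and "col_le n l c"
      using sorted \<open>c \<in> set L\<close> \<open>0 < M\<close> col_le_refl by (auto simp: L sorted_wrt_append)
    then show False using col_le_antisym \<open>l \<noteq> c\<close> by blast
  qed
  show "c \<notin> set R"
  proof
    assume "c \<in> set R"
    then obtain r R0 where R: "R = r # R0" and "r \<noteq> c"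
      using hR by (cases R) auto
    have "col_le n c r" and "col_le n r c"
      using sorted \<open>c \<in> set R\<close> \<open>0 < M\<close> col_le_refl by (auto simp: R sorted_wrt_append)
    then show False using col_le_antisym \<open>r \<noteq> c\<close> by blast
  qed
qed

lemma maximal_run_unique:
  assumes "C1 n T" "maximal_run T c L M R" "maximal_run T c L' M' R'"
  shows "L' = L \<and> M' = M \<and> R' = R"
proof -
  have canonical: "L = takeWhile (\<lambda>x. x \<noteq> c) T \<and> M = length (filter (\<lambda>x. x = c) T)"
    if "maximal_run T c L M R" for L M R
  proof -
    have "c \<notin> set L" "c \<notin> set R" "0 < M" "T = L @ replicate M c @ R"
      using maximal_run_outside[OF assms(1) that] that by (auto simp: maximal_run_def)
    then show ?thesis
      by (cases M) (auto simp: takeWhile_append filter_empty_conv)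
  qed
  from canonical[OF assms(2)] canonical[OF assms(3)] have "L' = L" "M' = M"
    by simp_all
  with assms(2,3) show ?thesis
    by (simp add: maximal_run_def)
qed

lemma pair_column_in_maximal_run:
  assumes tab: "T \<in> tabT n s" and run: "maximal_run T (a, bar a) L M R"
    and k: "k < length T" "T ! k = (x, bar x)"
  shows "x = a \<and> length L \<le> k \<and> k < length L + M"
proof -
  have T: "T = L @ replicate M (a, bar a) @ R"
    using run by (simp add: maximal_run_def)
  have "(x, bar x) \<in> set T" using k by (metis nth_mem)
  then have "x = a" using pair_column_letter_unique[OF tab maximal_run_mem[OF run]] by blast
  have C1: "C1 n T" using tab by (simp add: tabT_def)
  have "\<not> k < length L"
  proof
    assume "k < length L"
    then have "L ! k = (a, bar a)" using k \<open>x = a\<close> T by (simp add: nth_append)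
    then show False using maximal_run_outside(1)[OF C1 run] \<open>k < length L\<close> by (metis nth_mem)
  qed
  moreover have "\<not> length L + M \<le> k"
  proof
    assume "length L + M \<le> k"
    then obtain i where "k = length L + M + i" using le_Suc_ex by blast
    then have "R ! i = (a, bar a)" "i < length R"
      using k \<open>x = a\<close> T by (simp_all add: nth_append)
    then show False using maximal_run_outside(2)[OF C1 run] by (metis nth_mem)
  qed
  ultimately show ?thesis using \<open>x = a\<close> by simp
qed

definition attached :: "letter \<Rightarrow> column list \<Rightarrow> column list \<Rightarrow> bool" where
  "attached a L R \<longleftrightarrow> (L \<noteq> [] \<and> fst (last L) = a) \<or> (R \<noteq> [] \<and> snd (hd R) = bar a)"

lemma conf1_iff_maximal_run:
  assumes "0 < m"
  shows "conf1 T a m \<longleftrightarrow>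
    (\<exists>L R. maximal_run T (a, bar a) L m R \<and> L \<noteq> [] \<and> fst (last L) = a)"
proof
  assume "conf1 T a m"
  then obtain L b R where "T = (L @ [(a, b)]) @ replicate m (a, bar a) @ R" "b \<noteq> bar a"
    "R = [] \<or> hd R \<noteq> (a, bar a)"
    by (auto simp: conf1_def)
  then show "\<exists>L R. maximal_run T (a, bar a) L m R \<and> L \<noteq> [] \<and> fst (last L) = a"
    using assms by (intro exI[of _ "L @ [(a, b)]"] exI[of _ R]) (simp add: maximal_run_def)
next
  assume "\<exists>L R. maximal_run T (a, bar a) L m R \<and> L \<noteq> [] \<and> fst (last L) = a"
  then obtain L0 b R where "maximal_run T (a, bar a) (L0 @ [(a, b)]) m R"
    by (metis rev_exhaust last_snoc prod.collapse)
  then show "conf1 T a m" by (auto simp: maximal_run_def conf1_def)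
qed

lemma conf2_iff_maximal_run:
  assumes "0 < m"
  shows "conf2 T a m \<longleftrightarrow>
    (\<exists>L R. maximal_run T (a, bar a) L m R \<and> R \<noteq> [] \<and> snd (hd R) = bar a)"
proof
  assume "conf2 T a m"
  then obtain L d R where "T = L @ replicate m (a, bar a) @ ((d, bar a) # R)" "d \<noteq> a"
    "L = [] \<or> last L \<noteq> (a, bar a)"
    by (auto simp: conf2_def)
  then show "\<exists>L R. maximal_run T (a, bar a) L m R \<and> R \<noteq> [] \<and> snd (hd R) = bar a"
    using assms by (intro exI[of _ L] exI[of _ "(d, bar a) # R"]) (simp add: maximal_run_def)
next
  assume "\<exists>L R. maximal_run T (a, bar a) L m R \<and> R \<noteq> [] \<and> snd (hd R) = bar a"
  then obtain L d R0 where "maximal_run T (a, bar a) L m ((d, bar a) # R0)"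
    by (metis list.collapse prod.collapse)
  then show "conf2 T a m" by (auto simp: maximal_run_def conf2_def)
qed

lemma conf3_iff_maximal_run:
  "conf3 T a m \<longleftrightarrow> (\<exists>L R. maximal_run T (a, bar a) L (m + 1) R \<and> \<not> attached a L R)"
  unfolding conf3_def maximal_run_def attached_def by fastforce

lemma configuration_iff_maximal_run:
  assumes "0 < m"
  shows "conf1 T a m \<or> conf2 T a m \<or> conf3 T a m \<longleftrightarrow>
    (\<exists>L M R. maximal_run T (a, bar a) L M R \<and> m = (if attached a L R then M else M - 1))"
proof
  assume "conf1 T a m \<or> conf2 T a m \<or> conf3 T a m"
  then consider (attached) L R where "maximal_run T (a, bar a) L m R" "attached a L R"
    | (detached) L R where "maximal_run T (a, bar a) L (m + 1) R" "\<not> attached a L R"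
    using conf1_iff_maximal_run[OF assms] conf2_iff_maximal_run[OF assms] conf3_iff_maximal_run
    by (auto simp: attached_def)
  then show "\<exists>L M R. maximal_run T (a, bar a) L M R \<and> m = (if attached a L R then M else M - 1)"
  proof cases
    case (attached L R)
    then show ?thesis by (intro exI[of _ L] exI[of _ m] exI[of _ R]) simp
  next
    case (detached L R)
    then show ?thesis by (intro exI[of _ L] exI[of _ "m + 1"] exI[of _ R]) simp
  qed
next
  assume "\<exists>L M R. maximal_run T (a, bar a) L M R \<and> m = (if attached a L R then M else M - 1)"
  then obtain L M R where run: "maximal_run T (a, bar a) L M R"
    and m: "m = (if attached a L R then M else M - 1)"
    by blast
  show "conf1 T a m \<or> conf2 T a m \<or> conf3 T a m"
  proof (cases "attached a L R")
    case True
    then show ?thesis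
      using run m conf1_iff_maximal_run[OF assms] conf2_iff_maximal_run[OF assms]
      unfolding attached_def by auto
  next
    case False
    then have "M = m + 1" using m assms by simp
    then show ?thesis
      using run False conf3_iff_maximal_run by blast
  qed
qed

lemma pair_column_if_not_C3_C5:
  assumes "\<not> (C3 T \<and> C5 T)"
  obtains a where "(a, bar a) \<in> set T"
proof (cases "C3 T")
  case True
  then have "(Unb 1, bar (Unb 1)) \<in> set T" using assms by (auto simp: C5_def)
  then show thesis by (rule that)
next
  case False
  then obtain j x where j: "Suc j < length T"
    "T ! Suc j = (x, bar x) \<or> T ! j = (x, bar x)"
    unfolding C3_def by (metis prod.collapse)
  then have "(x, bar x) \<in> set T" by (metis Suc_lessD nth_mem)
  then show thesis by (rule that)
qed

lemma C3_if_detached_single_run: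
  assumes tab: "T \<in> tabT n s" and run: "maximal_run T (a, bar a) L 1 R"
    and detached: "\<not> attached a L R"
  shows "C3 T"
proof -
  have T: "T = L @ (a, bar a) # R" using run by (simp add: maximal_run_def)
  have at_run: "y = a \<and> k = length L" if "k < length T" "T ! k = (y, bar y)" for k y
    using pair_column_in_maximal_run[OF tab run that] by simp
  show ?thesis
    unfolding C3_def
  proof (intro allI impI conjI notI)
    fix j x
    assume j: "Suc j < length T"
      and "fst (T ! j) = x \<and> fst (T ! Suc j) = x \<and> snd (T ! Suc j) = bar x"
    then have "T ! Suc j = (x, bar x)" and top: "fst (T ! j) = x" by (auto simp: prod_eq_iff)
    with at_run[OF j] have "x = a" and L: "length L = Suc j" by auto
    then have "L \<noteq> []" by auto
    moreover have "last L = T ! j"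
      using T L \<open>L \<noteq> []\<close> by (simp add: nth_append last_conv_nth)
    ultimately show False using detached top \<open>x = a\<close> by (simp add: attached_def)
  next
    fix j x
    assume j: "Suc j < length T"
      and "fst (T ! j) = x \<and> snd (T ! j) = bar x \<and> snd (T ! Suc j) = bar x"
    then have "T ! j = (x, bar x)" and bottom: "snd (T ! Suc j) = bar x" by (auto simp: prod_eq_iff)
    with at_run[OF Suc_lessD[OF j]] have "x = a" and "j = length L" by auto
    then have "R \<noteq> []" and "hd R = T ! Suc j"
      using T j by (auto simp: nth_append hd_conv_nth)
    then show False using detached bottom \<open>x = a\<close> by (simp add: attached_def)
  qed
qed

lemma C5_if_detached_run:
  assumes tab: "T \<in> tabT n s" and run: "maximal_run T (a, bar a) L M R"
    and detached: "\<not> attached a L R"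
  shows "C5 T \<or> T = replicate M (Unb 1, Bar 1)"
proof (cases "C5 T")
  case False
  then have "(Unb 1, bar (Unb 1)) \<in> set T" by (auto simp: C5_def)
  then have a: "a = Unb 1"
    using pair_column_letter_unique[OF tab maximal_run_mem[OF run]] by blast
  have T: "T = L @ replicate M (a, bar a) @ R" and "0 < M"
    using run by (simp_all add: maximal_run_def)
  then have "sorted_wrt (col_le n) (L @ replicate M (a, bar a) @ R)"
    using tab by (simp add: tabT_def C1_iff_sorted_wrt)
  then have left: "\<forall>l\<in>set L. col_le n l (a, bar a)"
    and right: "\<forall>r\<in>set R. col_le n (a, bar a) r"
    using \<open>0 < M\<close> by (simp_all add: sorted_wrt_append)
  have "L = []"
  proof (rule ccontr)
    assume "L \<noteq> []"
    then have "le_D n (fst (last L)) (Unb 1)" and "valid_letter n (fst (last L))"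
      using left a tabT_column_valid[OF tab] T by (auto simp: col_le_def)
    then have "fst (last L) = a" using le_D_Unb1_eq a by blast
    then show False using detached \<open>L \<noteq> []\<close> by (simp add: attached_def)
  qed
  moreover have "R = []"
  proof (rule ccontr)
    assume "R \<noteq> []"
    then have "le_D n (Bar 1) (snd (hd R))" and "valid_letter n (snd (hd R))"
      using right a tabT_column_valid[OF tab] T by (auto simp: col_le_def)
    then have "snd (hd R) = bar a" using Bar1_le_D_eq a by simp
    then show False using detached \<open>R \<noteq> []\<close> by (simp add: attached_def)
  qed
  ultimately show ?thesis using T a by simp
qed simp

lemma configuration_exists:
  assumes tab: "T \<in> tabT n s" and not_KN: "\<not> (C3 T \<and> C5 T)"
    and not_all_one: "T \<noteq> replicate s (Unb 1, Bar 1)"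
  shows "\<exists>a m. a \<in> A_letters n \<and> 0 < m \<and> (conf1 T a m \<or> conf2 T a m \<or> conf3 T a m)"
proof -
  obtain a where a: "(a, bar a) \<in> set T"
    using pair_column_if_not_C3_C5[OF not_KN] .
  obtain L M R where run: "maximal_run T (a, bar a) L M R"
    using maximal_run_exists[OF a] .
  have "attached a L R \<or> 2 \<le> M"
  proof (rule ccontr)
    assume "\<not> (attached a L R \<or> 2 \<le> M)"
    then have detached: "\<not> attached a L R" and "M = 1"
      using maximal_run_pos[OF run] by auto
    have "length T = s" using tab by (simp add: tabT_def is_tableau_def)
    then have "T \<noteq> replicate M (Unb 1, Bar 1)" using not_all_one by auto
    have "C3 T"
      using C3_if_detached_single_run[OF tab _ detached] run \<open>M = 1\<close> by simp
    moreover have "C5 T"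
      using C5_if_detached_run[OF tab run detached] \<open>T \<noteq> replicate M (Unb 1, Bar 1)\<close> by blast
    ultimately show False using not_KN by blast
  qed
  then have "0 < (if attached a L R then M else M - 1)"
    using maximal_run_pos[OF run] by auto
  then show ?thesis
    using configuration_iff_maximal_run run pair_column_letter[OF tab a] by blast
qed

lemma configuration_unique:
  assumes tab: "T \<in> tabT n s" and "0 < m" "0 < m'"
    and "conf1 T a m \<or> conf2 T a m \<or> conf3 T a m"
    and "conf1 T a' m' \<or> conf2 T a' m' \<or> conf3 T a' m'"
  shows "a' = a \<and> m' = m"
proof -
  obtain L M R where run: "maximal_run T (a, bar a) L M R"
    and m: "m = (if attached a L R then M else M - 1)"
    using assms(2,4) configuration_iff_maximal_run by blast
  obtain L' M' R' where run': "maximal_run T (a', bar a') L' M' R'"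
    and m': "m' = (if attached a' L' R' then M' else M' - 1)"
    using assms(3,5) configuration_iff_maximal_run by blast
  have "a' = a"
    using pair_column_letter_unique[OF tab maximal_run_mem[OF run] maximal_run_mem[OF run']] ..
  moreover have "C1 n T" using tab by (simp add: tabT_def)
  ultimately have "L' = L \<and> M' = M \<and> R' = R"
    using maximal_run_unique run run' by blast
  then show ?thesis using m m' \<open>a' = a\<close> by simp
qed

theorem proposition4p1:
  fixes n s :: nat and T :: "column list"
  assumes "n \<ge> 4" and "s \<ge> 1"
    and "T \<in> tabT n s" and "T \<notin> B_KN n s"
    and "T \<noteq> replicate s (Unb 1, Bar 1)"
  shows "\<exists>!am :: letter \<times> nat. fst am \<in> A_letters n \<and> snd am > 0 \<and>
           (conf1 T (fst am) (snd am) \<or> conf2 T (fst am) (snd am) \<or> conf3 T (fst am) (snd am))"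
proof -
  have "\<not> (C3 T \<and> C5 T)" using assms(3,4) by (simp add: tabT_def B_KN_def)
  then obtain a m where "a \<in> A_letters n" "0 < m" "conf1 T a m \<or> conf2 T a m \<or> conf3 T a m"
    using configuration_exists[OF assms(3) _ assms(5)] by blast
  then show ?thesis
    using configuration_unique[OF assms(3) \<open>0 < m\<close>]
    by (intro ex1I[of _ "(a, m)"]) (auto simp: prod_eq_iff)
qed

end
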